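(* Let $n\ge3$ and $\tau\in\mathbb{C}^\times$. With $\Delta$ as in the context, $$\prod_{\mu=2}^{n-2}(x_\mu-z_1\tau)\,\Delta(z_1\tau^{-1},x_2,\dots,x_{n-2}\,|\,z_1\tau^{-n},z_2,\dots,z_n)=\prod_{\mu=2}^{n-2}(x_\mu-z_1\tau^{-1})\,\Delta(z_1\tau,x_2,\dots,x_{n-2}\,|\,z_1\tau^{n},z_2,\dots,z_n).$$
   Context: For $\lambda\ge1$, $A_\lambda(x|z_1,\dots,z_n)=\sum_{\kappa=0}^{\lambda}(-1)^\kappa x^{\lambda-\kappa}\big(\tau^{n(\lambda-\kappa)+\kappa}-\tau^{-n(\lambda-\kappa)-\kappa}\big)\sigma_\kappa(z_1,\dots,z_n)$, where $\sigma_\kappa$ is the $\kappa$-th elementary symmetric polynomial ($\sigma_\kappa=0$ for $\kappa>n$), and $\Delta(x_1,\dots,x_{n-2}|z_1,\dots,z_n)=\det\big(A_\lambda(x_\mu|z_1,\dots,z_n)\big)_{1\le\lambda,\mu\le n-2}$. *)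

theory Defs
  imports Complex_Main "Jordan_Normal_Form.Determinant"
begin

definition esym :: "nat \<Rightarrow> nat \<Rightarrow> (nat \<Rightarrow> complex) \<Rightarrow> complex" where
  "esym n k z = (\<Sum>S\<in>{S. S \<subseteq> {1..n} \<and> card S = k}. \<Prod>i\<in>S. z i)"

definition Apoly :: "complex \<Rightarrow> nat \<Rightarrow> nat \<Rightarrow> complex \<Rightarrow> (nat \<Rightarrow> complex) \<Rightarrow> complex" where
  "Apoly \<tau> n lam x z = (\<Sum>\<kappa>=0..lam. (-1) ^ \<kappa> * x ^ (lam - \<kappa>) *
      (\<tau> powi (int n * int (lam - \<kappa>) + int \<kappa>) - \<tau> powi (- (int n * int (lam - \<kappa>)) - int \<kappa>))
      * esym n \<kappa> z)"

definition Delta :: "complex \<Rightarrow> nat \<Rightarrow> (nat \<Rightarrow> complex) \<Rightarrow> (nat \<Rightarrow> complex) \<Rightarrow> complex" where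
  "Delta \<tau> n x z = det (mat (n - 2) (n - 2) (\<lambda>(i, j). Apoly \<tau> n (i + 1) (x (j + 1)) z))"

end

theory Submission
  imports Defs
begin

(* Write a = z_1, T = tau^n and let sigma' be the elementary symmetric functions of z_2..z_n.
   On each side, subtract the first column of the determinant from the others and multiply
   column mu by x_mu - a tau (resp. x_mu - a/tau): this absorbs the prefactor.  Splitting z_1
   off sigma writes A_lambda as a difference of the truncated sums
   sum_kappa (-1)^kappa y^(lambda-kappa) t^kappa sigma'_kappa for (t, y) = (tau, x T) and
   (1/tau, x/T).  After subtracting a T/tau (resp. a tau/T) times row lambda from row
   lambda+1, both first columns agree and every other entry of both sides becomes
   (x - a tau)(x - a/tau) H(x) for one and the same H; the row operations are unimodular. *)

definition esym_on :: "'i set \<Rightarrow> ('i \<Rightarrow> 'a::comm_semiring_1) \<Rightarrow> nat \<Rightarrow> 'a" where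
  "esym_on A z k = (\<Sum>S\<in>{S. S \<subseteq> A \<and> card S = k}. \<Prod>i\<in>S. z i)"

lemma esym_on_Pow:
  "finite A \<Longrightarrow> esym_on A z k = (\<Sum>S\<in>Pow A. if card S = k then \<Prod>i\<in>S. z i else 0)"
  unfolding esym_on_def by (simp add: sum.inter_filter[symmetric] Collect_conj_eq Pow_def Int_commute)

lemma esym_on_0: "finite A \<Longrightarrow> esym_on A z 0 = 1"
proof -
  assume "finite A"
  then have "{S. S \<subseteq> A \<and> card S = 0} = {{}}"
    by (auto dest: finite_subset)
  then show ?thesis by (simp add: esym_on_def)
qed

lemma esym_on_insert:
  assumes "finite A" "a \<notin> A"
  shows "esym_on (insert a A) z (Suc k) = esym_on A z (Suc k) + z a * esym_on A z k"
proof -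
  let ?g = "\<lambda>k S. if card S = k then \<Prod>i\<in>S. z i else 0"
  have "esym_on (insert a A) z (Suc k) = sum (?g (Suc k)) (Pow A) + sum (?g (Suc k)) (insert a ` Pow A)"
    unfolding esym_on_Pow[OF finite_insert[THEN iffD2, OF assms(1)]] Pow_insert
    by (rule sum.union_disjoint) (use assms in auto)
  also have "sum (?g (Suc k)) (insert a ` Pow A) = (\<Sum>S\<in>Pow A. ?g (Suc k) (insert a S))"
    by (subst sum.reindex) (use assms in \<open>auto intro!: inj_onI simp: o_def\<close>)
  also have "\<dots> = (\<Sum>S\<in>Pow A. z a * ?g k S)"
  proof (intro sum.cong refl)
    fix S assume "S \<in> Pow A"
    then have "finite S" "a \<notin> S" using assms finite_subset by auto
    then show "?g (Suc k) (insert a S) = z a * ?g k S" by simp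
  qed
  finally show ?thesis
    by (simp add: esym_on_Pow assms sum_distrib_left)
qed

lemma esym_fun_upd_1:
  assumes "n \<ge> 1"
  shows "esym n k (z(1 := w)) = esym_on {2..n} z k + (if k = 0 then 0 else w * esym_on {2..n} z (k - 1))"
proof -
  have "{1..n} = insert 1 {2..n}" using assms by auto
  then have "esym n k (z(1 := w)) = esym_on (insert 1 {2..n}) (z(1 := w)) k"
    by (simp add: esym_def esym_on_def)
  moreover have "esym_on {2..n} (z(1 := w)) j = esym_on {2..n} z j" for j
    unfolding esym_on_def by (intro sum.cong prod.cong) auto
  ultimately show ?thesis
    by (cases k) (simp_all add: esym_on_0 esym_on_insert)
qed

definition char_sum :: "'a::comm_ring_1 \<Rightarrow> 'a \<Rightarrow> nat \<Rightarrow> (nat \<Rightarrow> 'a) \<Rightarrow> 'a" where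
  "char_sum t y k s = (\<Sum>\<kappa>=0..k. (-1) ^ \<kappa> * y ^ (k - \<kappa>) * t ^ \<kappa> * s \<kappa>)"

definition char_sum_pred :: "'a::comm_ring_1 \<Rightarrow> 'a \<Rightarrow> nat \<Rightarrow> (nat \<Rightarrow> 'a) \<Rightarrow> 'a" where
  "char_sum_pred t y k s = (if k = 0 then 0 else char_sum t y (k - 1) s)"

lemma char_sum_pred_Suc [simp]: "char_sum_pred t y (Suc k) s = char_sum t y k s"
  by (simp add: char_sum_pred_def)

lemma char_sum_rec: "char_sum t y k s = y * char_sum_pred t y k s + (-1) ^ k * t ^ k * s k"
proof (cases k)
  case (Suc j)
  have "char_sum t y (Suc j) s
      = (\<Sum>\<kappa>=0..j. y * ((-1) ^ \<kappa> * y ^ (j - \<kappa>) * t ^ \<kappa> * s \<kappa>)) + (-1) ^ Suc j * t ^ Suc j * s (Suc j)"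
    unfolding char_sum_def sum.atLeast0_atMost_Suc
    by (intro arg_cong2[where f = "(+)"] sum.cong refl) (auto simp: Suc_diff_le)
  then show ?thesis
    using Suc by (simp add: char_sum_def sum_distrib_left)
qed (simp add: char_sum_def char_sum_pred_def)

lemma char_sum_shift:
  "char_sum t y k (\<lambda>\<kappa>. s \<kappa> + (if \<kappa> = 0 then 0 else w * s (\<kappa> - 1)))
     = char_sum t y k s - w * t * char_sum_pred t y k s"
proof (cases k)
  case (Suc j)
  have "(\<Sum>\<kappa>=0..Suc j. (-1) ^ \<kappa> * y ^ (Suc j - \<kappa>) * t ^ \<kappa> * (if \<kappa> = 0 then 0 else w * s (\<kappa> - 1)))
      = (\<Sum>\<kappa>=0..j. (-1) ^ Suc \<kappa> * y ^ (j - \<kappa>) * t ^ Suc \<kappa> * (w * s \<kappa>))"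
    by (subst sum.atLeast0_atMost_Suc_shift) simp
  also have "\<dots> = - (w * t * char_sum t y j s)"
    unfolding char_sum_def sum_distrib_left sum_negf[symmetric]
    by (intro sum.cong refl) (simp add: algebra_simps)
  finally show ?thesis
    using Suc by (simp add: char_sum_def distrib_left sum.distrib)
qed (simp add: char_sum_def char_sum_pred_def)

lemma Apoly_eq_char_sum:
  "Apoly \<tau> n l x z = char_sum \<tau> (x * \<tau> ^ n) l (\<lambda>\<kappa>. esym n \<kappa> z)
     - char_sum (inverse \<tau>) (x * inverse (\<tau> ^ n)) l (\<lambda>\<kappa>. esym n \<kappa> z)"
proof -
  have powi_pos: "\<tau> powi (int n * int (l - \<kappa>) + int \<kappa>) = (\<tau> ^ n) ^ (l - \<kappa>) * \<tau> ^ \<kappa>"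
   and powi_neg: "\<tau> powi (- (int n * int (l - \<kappa>)) - int \<kappa>) = inverse (\<tau> ^ n) ^ (l - \<kappa>) * inverse \<tau> ^ \<kappa>" for \<kappa>
  proof -
    have pos: "int n * int (l - \<kappa>) + int \<kappa> = int (n * (l - \<kappa>) + \<kappa>)"
     and neg: "- (int n * int (l - \<kappa>)) - int \<kappa> = - int (n * (l - \<kappa>) + \<kappa>)" by simp_all
    show "\<tau> powi (int n * int (l - \<kappa>) + int \<kappa>) = (\<tau> ^ n) ^ (l - \<kappa>) * \<tau> ^ \<kappa>"
      unfolding pos power_int_of_nat by (simp add: power_add power_mult)
    show "\<tau> powi (- (int n * int (l - \<kappa>)) - int \<kappa>) = inverse (\<tau> ^ n) ^ (l - \<kappa>) * inverse \<tau> ^ \<kappa>"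
      unfolding neg power_int_minus power_int_of_nat by (simp add: power_add power_mult power_inverse)
  qed
  show ?thesis
    unfolding Apoly_def char_sum_def sum_subtractf[symmetric] powi_pos powi_neg
    by (intro sum.cong refl) (simp add: algebra_simps)
qed

lemma Apoly_fun_upd_1:
  assumes "n \<ge> 1"
  shows "Apoly \<tau> n l x (z(1 := w)) =
      (char_sum \<tau> (x * \<tau> ^ n) l (esym_on {2..n} z) - w * \<tau> * char_sum_pred \<tau> (x * \<tau> ^ n) l (esym_on {2..n} z))
    - (char_sum (inverse \<tau>) (x * inverse (\<tau> ^ n)) l (esym_on {2..n} z)
         - w * inverse \<tau> * char_sum_pred (inverse \<tau>) (x * inverse (\<tau> ^ n)) l (esym_on {2..n} z))"
  unfolding Apoly_eq_char_sum esym_fun_upd_1[OF assms(1)] char_sum_shift ..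

definition col_reduced :: "(nat \<Rightarrow> 'a::comm_ring_1 \<Rightarrow> 'a) \<Rightarrow> 'a \<Rightarrow> 'a \<Rightarrow> (nat \<Rightarrow> 'a) \<Rightarrow> nat \<Rightarrow> nat \<Rightarrow> 'a" where
  "col_reduced A p y x l j =
     (if j = 0 then A l p else (x (Suc j) - y) * (A l (x (Suc j)) - A l p))"

lemma col_reduced_row_step:
  fixes AL AR :: "nat \<Rightarrow> 'a::comm_ring_1 \<Rightarrow> 'a"
  assumes R: "\<And>v. AR (Suc k) v - c * AR k v = AR (Suc k) p - c * AR k p + (v - p) * H v"
    and L: "\<And>v. AL (Suc k) v - b * AL k v = AR (Suc k) v - c * AR k v + (p - q) * H v"
  shows "col_reduced AL q p x (Suc k) j - b * col_reduced AL q p x k j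
           = col_reduced AR p q x (Suc k) j - c * col_reduced AR p q x k j"
proof -
  have L': "AL (Suc k) v - b * AL k v = AR (Suc k) p - c * AR k p + (v - q) * H v" for v
    unfolding L[of v] R[of v] by (simp add: algebra_simps)
  show ?thesis
  proof (cases "j = 0")
    case True
    then show ?thesis
      using L'[of q] by (simp add: col_reduced_def)
  next
    case False
    define v where "v = x (Suc j)"
    have "col_reduced AL q p x (Suc k) j - b * col_reduced AL q p x k j
        = (v - p) * ((AL (Suc k) v - b * AL k v) - (AL (Suc k) q - b * AL k q))"
      using False by (simp add: col_reduced_def v_def algebra_simps)
    also have "\<dots> = (v - q) * ((AR (Suc k) v - c * AR k v) - (AR (Suc k) p - c * AR k p))"
      unfolding L'[of v] L'[of q] R[of v] by (simp add: algebra_simps)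
    also have "\<dots> = col_reduced AR p q x (Suc k) j - c * col_reduced AR p q x k j"
      using False by (simp add: col_reduced_def v_def algebra_simps)
    finally show ?thesis .
  qed
qed

lemma Apoly_col_reduced_row_step:
  fixes \<tau> a :: complex and z x :: "nat \<Rightarrow> complex" and k n :: nat
  assumes "\<tau> \<noteq> 0" "n \<ge> 1"
  defines "T \<equiv> \<tau> ^ n"
  defines "V \<equiv> inverse T" and "u \<equiv> inverse \<tau>"
  defines "AL \<equiv> \<lambda>l v. Apoly \<tau> n l v (z(1 := a * V))"
    and "AR \<equiv> \<lambda>l v. Apoly \<tau> n l v (z(1 := a * T))"
  shows "col_reduced AL (a * u) (a * \<tau>) x (Suc k) j - a * T * u * col_reduced AL (a * u) (a * \<tau>) x k j
       = col_reduced AR (a * \<tau>) (a * u) x (Suc k) j - a * \<tau> * V * col_reduced AR (a * \<tau>) (a * u) x k j"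
proof -
  \<comment> \<open>H is the common difference quotient of both row combinations; expanding one step
      of char_sum_rec, the two identities below only need T V = 1 and \<tau> u = 1.\<close>
  define H where "H v = T * char_sum \<tau> (v * T) k (esym_on {2..n} z)
                 - a * \<tau> * char_sum_pred \<tau> (v * T) k (esym_on {2..n} z)
                 - V * char_sum u (v * V) k (esym_on {2..n} z)
                 + a * u * char_sum_pred u (v * V) k (esym_on {2..n} z)" for v
  have "T \<noteq> 0" using assms(1) by (simp add: T_def)
  note expand = Apoly_fun_upd_1[OF assms(2)] char_sum_rec char_sum_pred_Suc
    u_def[symmetric] V_def[symmetric] T_def[symmetric]
  show ?thesis
  proof (rule col_reduced_row_step[where H = H])
    show "AR (Suc k) v - a * \<tau> * V * AR k v
            = AR (Suc k) (a * \<tau>) - a * \<tau> * V * AR k (a * \<tau>) + (v - a * \<tau>) * H v" for v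
      using \<open>T \<noteq> 0\<close> assms(1) unfolding AL_def AR_def H_def
      by (simp only: expand) (simp add: V_def u_def field_simps)
    show "AL (Suc k) v - a * T * u * AL k v
            = AR (Suc k) v - a * \<tau> * V * AR k v + (a * \<tau> - a * u) * H v" for v
      using \<open>T \<noteq> 0\<close> assms(1) unfolding AL_def AR_def H_def
      by (simp only: expand) (simp add: V_def u_def field_simps)
  qed
qed

lemma det_sub_prev_rows:
  fixes f :: "nat \<Rightarrow> nat \<Rightarrow> 'a::comm_ring_1"
  assumes "\<And>j. f 0 j = 0"
  shows "det (mat m m (\<lambda>(i, j). f (Suc i) j - b * f i j)) = det (mat m m (\<lambda>(i, j). f (Suc i) j))"
proof -
  define S where "S = mat m m (\<lambda>(i, k). (if i = k then 1 else 0) + (if i = Suc k then - b else 0))"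
  define M where "M = mat m m (\<lambda>(i, j). f (Suc i) j)"
  have carrier: "S \<in> carrier_mat m m" "M \<in> carrier_mat m m"
    unfolding S_def M_def by auto
  have "mat m m (\<lambda>(i, j). f (Suc i) j - b * f i j) = S * M"
  proof (rule eq_matI)
    fix i j assume "i < dim_row (S * M)" "j < dim_col (S * M)"
    then have ij: "i < m" "j < m" using carrier by auto
    have "(S * M) $$ (i, j) = (\<Sum>k<m. ((if i = k then 1 else 0) + (if i = Suc k then - b else 0)) * f (Suc k) j)"
      using ij by (simp add: S_def M_def scalar_prod_def atLeast0LessThan)
    also have "\<dots> = f (Suc i) j - b * f i j"
      using ij assms by (cases i) (simp_all add: distrib_right sum.distrib if_distrib[of "\<lambda>t. t * _"] cong: if_cong)
    finally show "mat m m (\<lambda>(i, j). f (Suc i) j - b * f i j) $$ (i, j) = (S * M) $$ (i, j)"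
      using ij by simp
  qed (use carrier in auto)
  moreover have "det S = 1"
    using det_lower_triangular[OF _ carrier(1)] prod_list_diag_prod[of S] carrier(1)
    by (simp add: S_def)
  ultimately show ?thesis
    using det_mult[OF carrier] by (simp add: M_def)
qed

lemma det_col_reduce:
  fixes f :: "nat \<Rightarrow> nat \<Rightarrow> 'a::comm_ring_1"
  shows "det (mat m m (\<lambda>(i, j). if j = 0 then f i 0 else c j * (f i j - f i 0)))
           = (\<Prod>j = 1..<m. c j) * det (mat m m (\<lambda>(i, j). f i j))"
proof -
  define E where "E = mat m m (\<lambda>(k, j). (if k = j then (if j = 0 then 1 else c j) else 0)
                                          - (if k = 0 \<and> j \<noteq> 0 then c j else 0))"
  define M where "M = mat m m (\<lambda>(i, j). f i j)"
  have carrier: "M \<in> carrier_mat m m" "E \<in> carrier_mat m m"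
    unfolding E_def M_def by auto
  have "mat m m (\<lambda>(i, j). if j = 0 then f i 0 else c j * (f i j - f i 0)) = M * E"
  proof (rule eq_matI)
    fix i j assume "i < dim_row (M * E)" "j < dim_col (M * E)"
    then have ij: "i < m" "j < m" using carrier by auto
    have "(M * E) $$ (i, j) = (\<Sum>k<m. f i k * ((if k = j then (if j = 0 then 1 else c j) else 0)
                                          - (if k = 0 \<and> j \<noteq> 0 then c j else 0)))"
      using ij by (simp add: E_def M_def scalar_prod_def atLeast0LessThan)
    also have "\<dots> = (if j = 0 then f i 0 else c j * (f i j - f i 0))"
      using ij by (cases "j = 0") (simp_all add: right_diff_distrib sum_subtractf
          if_distrib[of "\<lambda>t. _ * t"] algebra_simps cong: if_cong)
    finally show "mat m m (\<lambda>(i, j). if j = 0 then f i 0 else c j * (f i j - f i 0)) $$ (i, j)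
                    = (M * E) $$ (i, j)"
      using ij by simp
  qed (use carrier in auto)
  moreover have "det E = (\<Prod>j = 1..<m. c j)"
  proof -
    have "upper_triangular E"
      unfolding E_def by (intro upper_triangularI) auto
    then have "det E = (\<Prod>j = 0..<m. E $$ (j, j))"
      using det_upper_triangular[OF _ carrier(2)] prod_list_diag_prod[of E] carrier(2) by simp
    also have "\<dots> = (\<Prod>j = 0..<m. if j = 0 then 1 else c j)"
      by (intro prod.cong) (auto simp: E_def)
    also have "\<dots> = (\<Prod>j = 1..<m. c j)"
      by (cases "m = 0") (simp_all add: prod.atLeast_Suc_lessThan)
    finally show ?thesis .
  qed
  ultimately show ?thesis
    using det_mult[OF carrier] by (simp add: M_def mult.commute)
qed

lemma Delta_col_reduce:
  "(\<Prod>\<mu> = 2..n - 2. x \<mu> - y) * Delta \<tau> n (x(1 := p)) z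
     = det (mat (n - 2) (n - 2) (\<lambda>(i, j). col_reduced (\<lambda>l v. Apoly \<tau> n l v z) p y x (Suc i) j))"
proof -
  define f where "f i j = Apoly \<tau> n (Suc i) ((x(1 := p)) (Suc j)) z" for i j
  have shift: "{2..n - 2} = Suc ` {1..<n - 2}"
    by (simp add: image_Suc_atLeastLessThan atLeastLessThanSuc_atLeastAtMost numeral_2_eq_2)
  have "(\<Prod>\<mu> = 2..n - 2. x \<mu> - y) = (\<Prod>j = 1..<n - 2. x (Suc j) - y)"
    using shift by (intro prod.reindex_cong[where l = Suc]) auto
  moreover have "det (mat (n - 2) (n - 2) (\<lambda>(i, j). col_reduced (\<lambda>l v. Apoly \<tau> n l v z) p y x (Suc i) j))
      = det (mat (n - 2) (n - 2) (\<lambda>(i, j). if j = 0 then f i 0 else (x (Suc j) - y) * (f i j - f i 0)))"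
    by (intro arg_cong[where f = det] arg_cong[where f = "mat _ _"]) (auto simp: col_reduced_def f_def fun_eq_iff)
  moreover have "\<dots> = (\<Prod>j = 1..<n - 2. x (Suc j) - y) * det (mat (n - 2) (n - 2) (\<lambda>(i, j). f i j))"
    by (rule det_col_reduce)
  ultimately show ?thesis
    by (simp add: Delta_def f_def)
qed

theorem lemma4p2:
  fixes \<tau> :: complex and n :: nat and x z :: "nat \<Rightarrow> complex"
  assumes "n \<ge> 3" and "\<tau> \<noteq> 0"
  shows "(\<Prod>\<mu>=2..n-2. (x \<mu> - z 1 * \<tau>)) *
           Delta \<tau> n (x(1 := z 1 * \<tau> powi (-1))) (z(1 := z 1 * \<tau> powi (- int n)))
       = (\<Prod>\<mu>=2..n-2. (x \<mu> - z 1 * \<tau> powi (-1))) *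
           Delta \<tau> n (x(1 := z 1 * \<tau>)) (z(1 := z 1 * \<tau> ^ n))"
proof -
  define a where "a = z 1"
  define m where "m = n - 2"
  define eL where "eL = col_reduced (\<lambda>l v. Apoly \<tau> n l v (z(1 := a * inverse (\<tau> ^ n))))
                                     (a * inverse \<tau>) (a * \<tau>) x"
  define eR where "eR = col_reduced (\<lambda>l v. Apoly \<tau> n l v (z(1 := a * \<tau> ^ n)))
                                     (a * \<tau>) (a * inverse \<tau>) x"
  have powi: "\<tau> powi (-1) = inverse \<tau>" "\<tau> powi (- int n) = inverse (\<tau> ^ n)"
    by (simp_all add: power_int_minus power_int_of_nat)
  have first_row: "eL 0 j = 0" "eR 0 j = 0" for j
    by (simp_all add: eL_def eR_def col_reduced_def Apoly_def)
  have "(\<Prod>\<mu>=2..n-2. (x \<mu> - z 1 * \<tau>)) *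
          Delta \<tau> n (x(1 := z 1 * \<tau> powi (-1))) (z(1 := z 1 * \<tau> powi (- int n)))
      = det (mat m m (\<lambda>(i, j). eL (Suc i) j))"
    unfolding powi a_def[symmetric] m_def eL_def by (rule Delta_col_reduce)
  also have "\<dots> = det (mat m m (\<lambda>(i, j). eL (Suc i) j - a * \<tau> ^ n * inverse \<tau> * eL i j))"
    by (rule det_sub_prev_rows[symmetric]) (rule first_row)
  also have "\<dots> = det (mat m m (\<lambda>(i, j). eR (Suc i) j - a * \<tau> * inverse (\<tau> ^ n) * eR i j))"
    using Apoly_col_reduced_row_step[OF assms(2)] assms(1) by (simp add: eL_def eR_def)
  also have "\<dots> = det (mat m m (\<lambda>(i, j). eR (Suc i) j))"
    by (rule det_sub_prev_rows) (rule first_row)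
  also have "\<dots> = (\<Prod>\<mu>=2..n-2. (x \<mu> - z 1 * \<tau> powi (-1))) *
                     Delta \<tau> n (x(1 := z 1 * \<tau>)) (z(1 := z 1 * \<tau> ^ n))"
    unfolding powi a_def[symmetric] m_def eR_def by (rule Delta_col_reduce[symmetric])
  finally show ?thesis .
qed

end
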